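(* Let $G$ be a non-archimedean Hausdorff topological group, $M$ a Hausdorff topological group, and $f:M\to G$ a continuous homomorphism which is an epimorphism in the category of Hausdorff topological groups. Then $f(M)$ is dense in $G$.
   Context: A topological group is non-archimedean if it has a local base at the identity consisting of open subgroups. $f$ is an epimorphism in the category of Hausdorff topological groups if for every Hausdorff topological group $F$ and all continuous homomorphisms $g,h:G\to F$, $g\circ f=h\circ f$ implies $g=h$. *)

theory Defs
  imports "HOL-Analysis.Analysis" "HOL-Algebra.Group"
begin

definition topological_group :: "('a, 'b) monoid_scheme \<Rightarrow> 'a topology \<Rightarrow> bool" where
  "topological_group G T \<longleftrightarrow>
     group G \<and> topspace T = carrier G \<and>
     continuous_map (prod_topology T T) T (\<lambda>p. fst p \<otimes>\<^bsub>G\<^esub> snd p) \<and>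
     continuous_map T T (\<lambda>x. inv\<^bsub>G\<^esub> x)"

definition non_archimedean :: "('a, 'b) monoid_scheme \<Rightarrow> 'a topology \<Rightarrow> bool" where
  "non_archimedean G T \<longleftrightarrow>
     (\<forall>W. openin T W \<and> \<one>\<^bsub>G\<^esub> \<in> W \<longrightarrow>
        (\<exists>U. subgroup U G \<and> openin T U \<and> U \<subseteq> W))"

text \<open>Carrier type of the test groups F in the epimorphism condition (HOL cannot quantify
  over types inside a formula).\<close>
type_synonym 'a test_carrier = "('a set \<times> bool) \<Rightarrow> ('a set \<times> bool)"

definition epi_hausdorff_tg ::
  "('m, 'c) monoid_scheme \<Rightarrow> 'm topology \<Rightarrow> ('a, 'd) monoid_scheme \<Rightarrow> 'a topology
     \<Rightarrow> ('m \<Rightarrow> 'a) \<Rightarrow> bool" where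
  "epi_hausdorff_tg M TM G TG f \<longleftrightarrow>
     (\<forall>(F :: 'a test_carrier monoid) (TF :: 'a test_carrier topology) g h.
        topological_group F TF \<and> Hausdorff_space TF \<and>
        g \<in> hom G F \<and> continuous_map TG TF g \<and>
        h \<in> hom G F \<and> continuous_map TG TF h \<and>
        (\<forall>x \<in> carrier M. g (f x) = h (f x))
        \<longrightarrow> (\<forall>x \<in> carrier G. g x = h x))"

end

theory Submission
  imports Defs "HOL-Algebra.Coset"
begin

text \<open>
  Let \<open>f : M \<rightarrow> G\<close> be an epimorphism of Hausdorff topological groups and \<open>U\<close> an
  open subgroup of \<open>G\<close>.  \<open>G\<close> acts by left translation on the set of left cosets \<open>G/U\<close>; since
  \<open>U\<close> is open, this gives a continuous homomorphism \<open>g\<close> from \<open>G\<close> into the group of all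
  permutations of \<open>(set \<times> bool)\<close> with the topology of pointwise convergence (a Hausdorff
  topological group).  Let \<open>\<sigma>\<close> be the involution that flips the Boolean tag on the cosets
  of the form \<open>f(m)U\<close>.  Conjugating \<open>g\<close> by \<open>\<sigma>\<close> gives a second continuous homomorphism \<open>h\<close>,
  and \<open>g\<close>, \<open>h\<close> agree on \<open>f(M)\<close> because \<open>f(M)\<close> permutes those cosets among themselves.
  Hence \<open>g = h\<close>, and evaluating at the point \<open>(U, True)\<close> shows \<open>G = f(M) U\<close>.
  In a non-archimedean group every neighbourhood \<open>W\<close> of a point \<open>x\<close> contains a coset \<open>xU\<close>
  with \<open>U\<close> an open subgroup, so \<open>W\<close> meets \<open>f(M)\<close>: the image is dense.
\<close>

section \<open>The permutation group of a type with the topology of pointwise convergence\<close>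

definition perm_group :: "('b \<Rightarrow> 'b) monoid" where
  "perm_group = \<lparr>carrier = {p. bij p}, mult = (\<circ>), one = id\<rparr>"

definition perm_topology :: "('b \<Rightarrow> 'b) topology" where
  "perm_topology = subtopology (product_topology (\<lambda>_. discrete_topology UNIV) UNIV) {p. bij p}"

lemma topspace_perm_topology: "topspace perm_topology = {p. bij p}"
  by (simp add: perm_topology_def PiE_def extensional_def Pi_def)

lemma continuous_map_discrete_iff_fibres:
  "continuous_map X (discrete_topology UNIV) f \<longleftrightarrow> (\<forall>z. openin X {x \<in> topspace X. f x = z})"
proof
  assume "continuous_map X (discrete_topology UNIV) f"
  then show "\<forall>z. openin X {x \<in> topspace X. f x = z}"
    using openin_continuous_map_preimage[of X _ f "{_}"] by auto
next
  assume fibres: "\<forall>z. openin X {x \<in> topspace X. f x = z}"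
  show "continuous_map X (discrete_topology UNIV) f"
    unfolding continuous_map_def
  proof (intro conjI allI impI)
    fix S
    have "{x \<in> topspace X. f x \<in> S} = (\<Union>z\<in>S. {x \<in> topspace X. f x = z})" by auto
    then show "openin X {x \<in> topspace X. f x \<in> S}" using fibres by auto
  qed auto
qed

lemma continuous_map_perm_topology_iff:
  "continuous_map X perm_topology p \<longleftrightarrow>
     p \<in> topspace X \<rightarrow> {p. bij p} \<and> (\<forall>y. continuous_map X (discrete_topology UNIV) (\<lambda>x. p x y))"
  unfolding perm_topology_def continuous_map_in_subtopology continuous_map_componentwise_UNIV
  by auto

lemma continuous_map_perm_eval:
  "continuous_map perm_topology (discrete_topology UNIV) (\<lambda>p. p y)"
  unfolding perm_topology_def
  by (rule continuous_map_from_subtopology)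
     (rule continuous_map_product_projection[of y UNIV "\<lambda>_. discrete_topology UNIV", simplified])

lemma group_perm_group: "group perm_group"
proof (rule groupI)
  fix p assume "p \<in> carrier perm_group"
  then have "inv_into UNIV p \<in> carrier perm_group \<and> inv_into UNIV p \<otimes>\<^bsub>perm_group\<^esub> p = \<one>\<^bsub>perm_group\<^esub>"
    by (simp add: perm_group_def bij_imp_bij_inv bij_is_inj inv_o_cancel)
  then show "\<exists>q \<in> carrier perm_group. q \<otimes>\<^bsub>perm_group\<^esub> p = \<one>\<^bsub>perm_group\<^esub>" by blast
qed (auto simp: perm_group_def bij_comp o_assoc)

lemma inv_perm_group: "bij p \<Longrightarrow> inv\<^bsub>perm_group\<^esub> p = inv_into UNIV p"
  by (rule group.inv_equality[OF group_perm_group])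
     (simp_all add: perm_group_def bij_imp_bij_inv bij_is_inj inv_o_cancel)

lemma Hausdorff_perm_topology: "Hausdorff_space perm_topology"
  unfolding perm_topology_def
  by (rule Hausdorff_space_subtopology) (simp add: Hausdorff_space_product_topology)

text \<open>Composition of permutations is continuous: the fibre of \<open>(p, q) \<mapsto> p (q y)\<close> over \<open>z\<close>
  is the union over \<open>w\<close> of the open sets where \<open>q y = w\<close> and \<open>p w = z\<close>.\<close>
lemma continuous_map_perm_compose:
  "continuous_map (prod_topology perm_topology perm_topology) perm_topology (\<lambda>pq. fst pq \<circ> snd pq)"
  unfolding continuous_map_perm_topology_iff
proof (intro conjI allI)
  let ?X = "prod_topology perm_topology perm_topology"
  show "(\<lambda>pq. fst pq \<circ> snd pq) \<in> topspace ?X \<rightarrow> {p. bij p}"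
    by (auto simp: topspace_perm_topology bij_comp)
  fix y
  have snd_eval: "openin ?X {pq \<in> topspace ?X. snd pq y = w}" for w
  proof -
    have "continuous_map ?X (discrete_topology UNIV) (\<lambda>pq. snd pq y)"
      by (rule continuous_map_compose[OF continuous_map_snd continuous_map_perm_eval, unfolded o_def])
    then show ?thesis unfolding continuous_map_discrete_iff_fibres by blast
  qed
  have fst_eval: "openin ?X {pq \<in> topspace ?X. fst pq w = z}" for w z
  proof -
    have "continuous_map ?X (discrete_topology UNIV) (\<lambda>pq. fst pq w)"
      by (rule continuous_map_compose[OF continuous_map_fst continuous_map_perm_eval, unfolded o_def])
    then show ?thesis unfolding continuous_map_discrete_iff_fibres by blast
  qed
  show "continuous_map ?X (discrete_topology UNIV) (\<lambda>pq. (fst pq \<circ> snd pq) y)"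
    unfolding continuous_map_discrete_iff_fibres
  proof
    fix z
    have "{pq \<in> topspace ?X. (fst pq \<circ> snd pq) y = z} =
          (\<Union>w. {pq \<in> topspace ?X. snd pq y = w} \<inter> {pq \<in> topspace ?X. fst pq w = z})"
      by auto
    moreover have "openin ?X (\<Union>w. {pq \<in> topspace ?X. snd pq y = w} \<inter> {pq \<in> topspace ?X. fst pq w = z})"
      by (rule openin_Union) (auto intro!: openin_Int snd_eval fst_eval simp del: topspace_prod_topology)
    ultimately show "openin ?X {pq \<in> topspace ?X. (fst pq \<circ> snd pq) y = z}" by simp
  qed
qed

text \<open>Inversion is continuous: \<open>p\<^sup>-\<^sup>1 y = z\<close> iff \<open>p z = y\<close>.\<close>
lemma continuous_map_perm_inverse:
  "continuous_map perm_topology perm_topology (inv_into UNIV)"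
  unfolding continuous_map_perm_topology_iff
proof (intro conjI allI)
  show "inv_into UNIV \<in> topspace perm_topology \<rightarrow> {p. bij p}"
    by (auto simp: topspace_perm_topology bij_imp_bij_inv)
  fix y
  show "continuous_map perm_topology (discrete_topology UNIV) (\<lambda>p. inv_into UNIV p y)"
    unfolding continuous_map_discrete_iff_fibres
  proof
    fix z
    have "{p \<in> topspace perm_topology. inv_into UNIV p y = z} = {p \<in> topspace perm_topology. p z = y}"
      by (auto simp: topspace_perm_topology bij_inv_eq_iff bij_is_inj)
    then show "openin perm_topology {p \<in> topspace perm_topology. inv_into UNIV p y = z}"
      using continuous_map_perm_eval[of z] unfolding continuous_map_discrete_iff_fibres by simp
  qed
qed

lemma topological_group_perm: "topological_group perm_group perm_topology"
  unfolding topological_group_def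
proof (intro conjI)
  show "continuous_map perm_topology perm_topology (\<lambda>p. inv\<^bsub>perm_group\<^esub> p)"
    using continuous_map_perm_inverse
    by (rule continuous_map_eq) (simp add: topspace_perm_topology inv_perm_group)
qed (simp_all only: group_perm_group, simp_all add: topspace_perm_topology perm_group_def
      continuous_map_perm_compose)

lemma conjugate_representation:
  assumes hom: "g \<in> hom G perm_group" and cont: "continuous_map TG perm_topology g"
    and invol: "\<sigma> \<circ> \<sigma> = id"
  shows "(\<lambda>a. \<sigma> \<circ> g a \<circ> \<sigma>) \<in> hom G perm_group"
    and "continuous_map TG perm_topology (\<lambda>a. \<sigma> \<circ> g a \<circ> \<sigma>)"
proof -
  have "bij \<sigma>" by (rule o_bij[OF invol invol])
  have g_bij: "bij (g a)" if "a \<in> carrier G" for a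
    using hom that by (auto simp: hom_def perm_group_def)
  have "\<sigma> \<circ> g (a \<otimes>\<^bsub>G\<^esub> b) \<circ> \<sigma> = (\<sigma> \<circ> g a \<circ> \<sigma>) \<circ> (\<sigma> \<circ> g b \<circ> \<sigma>)"
    if "a \<in> carrier G" "b \<in> carrier G" for a b
  proof -
    have "(\<sigma> \<circ> g a \<circ> \<sigma>) \<circ> (\<sigma> \<circ> g b \<circ> \<sigma>) = \<sigma> \<circ> g a \<circ> (\<sigma> \<circ> \<sigma>) \<circ> g b \<circ> \<sigma>"
      by (simp add: o_assoc)
    also have "\<dots> = \<sigma> \<circ> g (a \<otimes>\<^bsub>G\<^esub> b) \<circ> \<sigma>"
      using hom that by (simp add: invol hom_mult perm_group_def o_assoc)
    finally show ?thesis by simp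
  qed
  then show "(\<lambda>a. \<sigma> \<circ> g a \<circ> \<sigma>) \<in> hom G perm_group"
    by (intro homI) (auto simp: perm_group_def g_bij \<open>bij \<sigma>\<close> bij_comp)
  have "continuous_map TG (discrete_topology UNIV) (\<lambda>a. \<sigma> (g a (\<sigma> y)))" for y
  proof -
    have "continuous_map TG (discrete_topology UNIV) (\<lambda>a. g a (\<sigma> y))"
      using cont by (simp add: continuous_map_perm_topology_iff)
    moreover have "continuous_map (discrete_topology UNIV) (discrete_topology UNIV) \<sigma>"
      by (simp add: continuous_map_from_discrete_topology)
    ultimately show ?thesis by (rule continuous_map_compose[unfolded o_def])
  qed
  then show "continuous_map TG perm_topology (\<lambda>a. \<sigma> \<circ> g a \<circ> \<sigma>)"
    using cont \<open>bij \<sigma>\<close> unfolding continuous_map_perm_topology_iff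
    by (auto simp: Pi_iff intro!: bij_comp)
qed

lemma topological_group_translation_continuous:
  assumes "topological_group G TG" "k1 \<in> carrier G" "k2 \<in> carrier G"
  shows "continuous_map TG TG (\<lambda>a. k1 \<otimes>\<^bsub>G\<^esub> a \<otimes>\<^bsub>G\<^esub> k2)"
proof -
  have ts: "topspace TG = carrier G"
    and mult: "continuous_map (prod_topology TG TG) TG (\<lambda>p. fst p \<otimes>\<^bsub>G\<^esub> snd p)"
    using assms(1) unfolding topological_group_def by auto
  have left: "continuous_map TG TG (\<lambda>a. k1 \<otimes>\<^bsub>G\<^esub> a)"
    using continuous_map_compose[OF continuous_map_pairedI[OF continuous_map_const[THEN iffD2]
          continuous_map_id] mult] assms ts
    by (auto simp: o_def)
  show ?thesis
    using continuous_map_compose[OF continuous_map_pairedI[OF left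
          continuous_map_const[THEN iffD2]] mult] assms ts
    by (auto simp: o_def)
qed

lemma (in group) l_coset_eq_iff:
  assumes "subgroup U G" "p \<in> carrier G" "q \<in> carrier G"
  shows "p <# U = q <# U \<longleftrightarrow> inv q \<otimes> p \<in> U"
proof
  assume eq: "p <# U = q <# U"
  have "p \<in> p <# U"
    using assms subgroup.one_closed unfolding l_coset_def by fastforce
  then obtain u where "u \<in> U" "p = q \<otimes> u"
    using eq unfolding l_coset_def by blast
  then show "inv q \<otimes> p \<in> U"
    using assms by (metis inv_solve_left subgroup.mem_carrier)
next
  assume "inv q \<otimes> p \<in> U"
  then have "p \<in> q <# U"
    using subgroup.lcos_module_rev[OF assms(1) is_group assms(3,2)] by blast
  then show "p <# U = q <# U"
    using l_repr_independence[OF _ assms(3,1)] by simp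
qed

section \<open>The action of a group on the left cosets of a subgroup\<close>

definition left_cosets :: "('a, 'b) monoid_scheme \<Rightarrow> 'a set \<Rightarrow> 'a set set" where
  "left_cosets G U = {c <#\<^bsub>G\<^esub> U | c. c \<in> carrier G}"

text \<open>\<open>a\<close> translates left cosets of \<open>U\<close> and fixes all other sets; the second component is a
  passive tag.  This makes \<open>G\<close> act on the whole type \<open>'a set \<times> 'c\<close>.\<close>
definition coset_action :: "('a, 'b) monoid_scheme \<Rightarrow> 'a set \<Rightarrow> 'a \<Rightarrow> 'a set \<times> 'c \<Rightarrow> 'a set \<times> 'c"
  where "coset_action G U a = (\<lambda>(C, t). (if C \<in> left_cosets G U then a <#\<^bsub>G\<^esub> C else C, t))"

lemma (in group) coset_action_l_coset:
  assumes "subgroup U G" "a \<in> carrier G" "c \<in> carrier G"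
  shows "coset_action G U a (c <# U, t) = ((a \<otimes> c) <# U, t)"
  using assms subgroup.subset[OF assms(1)]
  by (auto simp: coset_action_def left_cosets_def lcos_m_assoc)

lemma coset_action_other: "C \<notin> left_cosets G U \<Longrightarrow> coset_action G U a (C, t) = (C, t)"
  by (simp add: coset_action_def)

lemma (in group) coset_action_mult:
  assumes "subgroup U G" "a \<in> carrier G" "b \<in> carrier G"
  shows "coset_action G U (a \<otimes> b) = coset_action G U a \<circ> coset_action G U b"
proof
  fix y :: "'a set \<times> 'c"
  obtain C t where y: "y = (C, t)" by fastforce
  show "coset_action G U (a \<otimes> b) y = (coset_action G U a \<circ> coset_action G U b) y"
  proof (cases "C \<in> left_cosets G U")
    case True
    then obtain c where "c \<in> carrier G" "C = c <# U" unfolding left_cosets_def by blast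
    then show ?thesis using assms by (simp add: y coset_action_l_coset m_assoc)
  qed (simp add: y coset_action_other)
qed

lemma (in group) coset_action_one:
  assumes "subgroup U G"
  shows "coset_action G U \<one> = id"
proof
  fix y :: "'a set \<times> 'c"
  obtain C t where y: "y = (C, t)" by fastforce
  show "coset_action G U \<one> y = id y"
  proof (cases "C \<in> left_cosets G U")
    case True
    then obtain c where "c \<in> carrier G" "C = c <# U" unfolding left_cosets_def by blast
    then show ?thesis using assms by (simp add: y coset_action_l_coset)
  qed (simp add: y coset_action_other)
qed

lemma (in group) coset_action_hom:
  assumes "subgroup U G"
  shows "coset_action G U \<in> hom G perm_group"
proof -
  have "bij (coset_action G U a)" if "a \<in> carrier G" for a :: 'a
    using that assms
    by (intro o_bij[of "coset_action G U (inv a)"])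
       (simp_all flip: coset_action_mult add: coset_action_one)
  then show ?thesis
    using assms by (intro homI) (simp_all add: perm_group_def coset_action_mult)
qed

text \<open>The action is continuous because \<open>U\<close> is open: the set of \<open>a\<close> moving the coset \<open>cU\<close> to a
  given coset \<open>a\<^sub>0 c U\<close> is the preimage of \<open>U\<close> under the translation \<open>a \<mapsto> (a\<^sub>0 c)\<^sup>-\<^sup>1 a c\<close>.\<close>
lemma (in group) coset_action_continuous:
  assumes tg: "topological_group G TG" and U: "subgroup U G" "openin TG U"
  shows "continuous_map TG perm_topology (coset_action G U)"
  unfolding continuous_map_perm_topology_iff
proof (intro conjI allI)
  have ts: "topspace TG = carrier G" using tg unfolding topological_group_def by simp
  show "coset_action G U \<in> topspace TG \<rightarrow> {p. bij p}"
    using coset_action_hom[OF U(1)] ts by (auto simp: hom_def perm_group_def)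
  fix y :: "'a set \<times> 'c"
  obtain C t where y: "y = (C, t)" by fastforce
  show "continuous_map TG (discrete_topology UNIV) (\<lambda>a. coset_action G U a y)"
    unfolding continuous_map_discrete_iff_fibres
  proof
    fix z
    show "openin TG {a \<in> topspace TG. coset_action G U a y = z}"
    proof (cases "C \<in> left_cosets G U")
      case False
      then have "{a \<in> topspace TG. coset_action G U a y = z} = (if y = z then topspace TG else {})"
        by (auto simp: y coset_action_other)
      then show ?thesis by simp
    next
      case True
      then obtain c where c: "c \<in> carrier G" "C = c <# U" unfolding left_cosets_def by blast
      show ?thesis
      proof (cases "{a \<in> topspace TG. coset_action G U a y = z} = {}")
        case False
        then obtain a0 where a0: "a0 \<in> carrier G" "coset_action G U a0 y = z" using ts by auto
        have "coset_action G U a y = z \<longleftrightarrow> inv (a0 \<otimes> c) \<otimes> a \<otimes> c \<in> U"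
          if "a \<in> carrier G" for a
          using that a0 c U l_coset_eq_iff[OF U(1), of "a \<otimes> c" "a0 \<otimes> c"]
          by (auto simp: y coset_action_l_coset m_assoc)
        then have "{a \<in> topspace TG. coset_action G U a y = z} =
                   {a \<in> topspace TG. inv (a0 \<otimes> c) \<otimes> a \<otimes> c \<in> U}"
          using ts by auto
        moreover have "openin TG {a \<in> topspace TG. inv (a0 \<otimes> c) \<otimes> a \<otimes> c \<in> U}"
          using a0 c by (intro openin_continuous_map_preimage[OF
                topological_group_translation_continuous[OF tg] U(2)]) auto
        ultimately show ?thesis by simp
      qed (metis openin_empty)
    qed
  qed
qed

definition image_cosets ::
  "('m, 'c) monoid_scheme \<Rightarrow> ('a, 'b) monoid_scheme \<Rightarrow> ('m \<Rightarrow> 'a) \<Rightarrow> 'a set \<Rightarrow> 'a set set"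
  where "image_cosets M G f U = {f m <#\<^bsub>G\<^esub> U | m. m \<in> carrier M}"

definition flip_tag :: "'a set set \<Rightarrow> 'a set \<times> bool \<Rightarrow> 'a set \<times> bool" where
  "flip_tag S = (\<lambda>(C, b). if C \<in> S then (C, \<not> b) else (C, b))"

lemma flip_tag_involution: "flip_tag S \<circ> flip_tag S = id"
  by (auto simp: flip_tag_def fun_eq_iff)

lemma (in group) coset_action_flip_tag_commute:
  assumes "subgroup U G" "a \<in> carrier G" "S \<subseteq> left_cosets G U"
    and invariant: "\<And>C. C \<in> left_cosets G U \<Longrightarrow> a <# C \<in> S \<longleftrightarrow> C \<in> S"
  shows "coset_action G U a \<circ> flip_tag S = flip_tag S \<circ> coset_action G U a"
proof
  fix y :: "'a set \<times> bool"
  obtain C b where y: "y = (C, b)" by fastforce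
  show "(coset_action G U a \<circ> flip_tag S) y = (flip_tag S \<circ> coset_action G U a) y"
  proof (cases "C \<in> left_cosets G U")
    case True
    then have "coset_action G U a (C, t) = (a <# C, t)" for t :: bool
      by (simp add: coset_action_def)
    then show ?thesis using invariant[OF True] by (simp add: y flip_tag_def)
  next
    case False
    then have "coset_action G U a (C, t) = (C, t)" for t :: bool
      by (rule coset_action_other)
    moreover have "C \<notin> S" using False assms(3) by blast
    ultimately show ?thesis by (simp add: y flip_tag_def)
  qed
qed

lemma image_cosets_invariant:
  assumes f: "group_hom M G f" and U: "subgroup U G"
    and m: "m \<in> carrier M" and C: "C \<in> left_cosets G U"
  shows "f m <#\<^bsub>G\<^esub> C \<in> image_cosets M G f U \<longleftrightarrow> C \<in> image_cosets M G f U"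
proof -
  interpret group_hom M G f by (rule f)
  have Usub: "U \<subseteq> carrier G" using U by (rule subgroup.subset)
  have translate: "f k <#\<^bsub>G\<^esub> (f n <#\<^bsub>G\<^esub> U) = f (k \<otimes>\<^bsub>M\<^esub> n) <#\<^bsub>G\<^esub> U"
    if "k \<in> carrier M" "n \<in> carrier M" for k n
    using that Usub by (simp add: H.lcos_m_assoc)
  have Csub: "C \<subseteq> carrier G"
    using C Usub H.l_coset_subset_G unfolding left_cosets_def by blast
  have cancel: "f (inv\<^bsub>M\<^esub> m) <#\<^bsub>G\<^esub> (f m <#\<^bsub>G\<^esub> C) = C"
    using m Csub by (simp add: H.lcos_m_assoc flip: hom_mult, simp add: H.lcos_mult_one)
  show ?thesis
  proof
    assume "f m <#\<^bsub>G\<^esub> C \<in> image_cosets M G f U"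
    then obtain n where n: "n \<in> carrier M" "f m <#\<^bsub>G\<^esub> C = f n <#\<^bsub>G\<^esub> U"
      unfolding image_cosets_def by blast
    have "C = f (inv\<^bsub>M\<^esub> m) <#\<^bsub>G\<^esub> (f n <#\<^bsub>G\<^esub> U)"
      using cancel n(2) by simp
    also have "\<dots> = f (inv\<^bsub>M\<^esub> m \<otimes>\<^bsub>M\<^esub> n) <#\<^bsub>G\<^esub> U"
      using translate m n(1) by blast
    finally have "C = f (inv\<^bsub>M\<^esub> m \<otimes>\<^bsub>M\<^esub> n) <#\<^bsub>G\<^esub> U" .
    then show "C \<in> image_cosets M G f U"
      using m n(1) unfolding image_cosets_def by blast
  next
    assume "C \<in> image_cosets M G f U"
    then obtain n where "n \<in> carrier M" "C = f n <#\<^bsub>G\<^esub> U"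
      unfolding image_cosets_def by blast
    then show "f m <#\<^bsub>G\<^esub> C \<in> image_cosets M G f U"
      using translate m unfolding image_cosets_def by blast
  qed
qed

section \<open>Epimorphisms meet every coset of an open subgroup\<close>

text \<open>The test group is the permutation group
  of \<open>'a set \<times> bool\<close>; the two test homomorphisms are the coset action and its conjugate by the
  flip on the cosets meeting \<open>f(M)\<close>.\<close>
lemma epimorphism_meets_open_cosets:
  fixes G :: "('a, 'd) monoid_scheme" and M :: "('m, 'c) monoid_scheme"
  assumes tg: "topological_group G TG" and "group M" and hom: "f \<in> hom M G"
    and epi: "epi_hausdorff_tg M TM G TG f"
    and U: "subgroup U G" "openin TG U" and x: "x \<in> carrier G"
  shows "x <#\<^bsub>G\<^esub> U \<in> image_cosets M G f U"
proof -
  interpret group_hom M G f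
    using \<open>group M\<close> tg hom unfolding group_hom_def group_hom_axioms_def topological_group_def
    by blast
  define S where "S = image_cosets M G f U"
  define g :: "'a \<Rightarrow> 'a test_carrier" where "g = coset_action G U"
  define h where "h a = flip_tag S \<circ> g a \<circ> flip_tag S" for a
  have g_hom: "g \<in> hom G perm_group"
    unfolding g_def by (rule H.coset_action_hom[OF U(1)])
  have g_cont: "continuous_map TG perm_topology g"
    unfolding g_def by (rule H.coset_action_continuous[OF tg U])
  have h_hom: "h \<in> hom G perm_group" and h_cont: "continuous_map TG perm_topology h"
    unfolding h_def by (rule conjugate_representation[OF g_hom g_cont flip_tag_involution])+
  have S_cosets: "S \<subseteq> left_cosets G U"
    unfolding S_def image_cosets_def left_cosets_def by auto
  have "g (f m) = h (f m)" if m: "m \<in> carrier M" for m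
  proof -
    have commute: "g (f m) \<circ> flip_tag S = flip_tag S \<circ> g (f m)"
      unfolding g_def
      by (rule H.coset_action_flip_tag_commute[OF U(1) _ S_cosets])
         (use m image_cosets_invariant[OF group_hom_axioms U(1) m] in \<open>simp_all add: S_def\<close>)
    have "h (f m) = flip_tag S \<circ> (flip_tag S \<circ> g (f m))"
      by (simp add: h_def commute o_assoc flip: o_assoc[of _ "g (f m)"])
    also have "\<dots> = g (f m)"
      by (metis comp_assoc flip_tag_involution fun.map_id)
    finally show ?thesis by simp
  qed
  then have "g x = h x"
    using epi[unfolded epi_hausdorff_tg_def, rule_format, of perm_group perm_topology g h]
      topological_group_perm Hausdorff_perm_topology g_hom g_cont h_hom h_cont x
    by blast
  have one_coset: "\<one>\<^bsub>G\<^esub> <#\<^bsub>G\<^esub> U = U"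
    using H.lcos_mult_one[OF subgroup.subset[OF U(1)]] .
  then have "U = f \<one>\<^bsub>M\<^esub> <#\<^bsub>G\<^esub> U"
    by simp
  then have "U \<in> S"
    unfolding S_def image_cosets_def using one_closed by blast
  have g_at_U: "g x (U, b) = (x <#\<^bsub>G\<^esub> U, b)" for b
    using H.coset_action_l_coset[OF U(1) x H.one_closed, of b] one_coset x
    unfolding g_def by simp
  have "(x <#\<^bsub>G\<^esub> U, True) = h x (U, True)"
    using \<open>g x = h x\<close> g_at_U by metis
  also have "\<dots> = flip_tag S (x <#\<^bsub>G\<^esub> U, False)"
    using \<open>U \<in> S\<close> by (simp add: h_def flip_tag_def g_at_U)
  finally show ?thesis
    unfolding S_def flip_tag_def by (simp split: if_splits)
qed

text \<open>In a non-archimedean group every neighbourhood of a point \<open>x\<close> contains a coset \<open>xU\<close> of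
  an open subgroup \<open>U\<close>: pull the neighbourhood back to the identity by left translation.\<close>
lemma non_archimedean_coset_neighbourhood:
  fixes G (structure)
  assumes tg: "topological_group G TG" and na: "non_archimedean G TG"
    and W: "openin TG W" "x \<in> W"
  obtains U where "subgroup U G" "openin TG U" "x <#\<^bsub>G\<^esub> U \<subseteq> W"
proof -
  have ts: "topspace TG = carrier G" and "group G"
    using tg unfolding topological_group_def by auto
  interpret group G by fact
  have x: "x \<in> carrier G" using W openin_subset ts by blast
  define V where "V = {a \<in> topspace TG. x \<otimes> a \<otimes> \<one> \<in> W}"
  have "openin TG V"
    unfolding V_def
    by (rule openin_continuous_map_preimage[OF
          topological_group_translation_continuous[OF tg x one_closed] W(1)])
  moreover have "\<one> \<in> V" using W x ts by (simp add: V_def)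
  ultimately obtain U where U: "subgroup U G" "openin TG U" "U \<subseteq> V"
    using na unfolding non_archimedean_def by blast
  have "x <# U \<subseteq> W"
    using U(3) subgroup.subset[OF U(1)] x unfolding V_def l_coset_def by (auto simp: subset_iff)
  with U(1,2) show ?thesis by (rule that)
qed

theorem theorem6p7:
  fixes G :: "'a monoid" and TG :: "'a topology"
    and M :: "'m monoid" and TM :: "'m topology"
    and f :: "'m \<Rightarrow> 'a"
  assumes "topological_group G TG" and "Hausdorff_space TG" and "non_archimedean G TG"
    and "topological_group M TM" and "Hausdorff_space TM"
    and "f \<in> hom M G" and "continuous_map TM TG f"
    and "epi_hausdorff_tg M TM G TG f"
  shows "TG closure_of (f ` carrier M) = topspace TG"
proof -
  have "group M" using assms(4) unfolding topological_group_def by simp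
  have "\<exists>y \<in> f ` carrier M. y \<in> W" if W: "openin TG W" "x \<in> W" for x W
  proof -
    obtain U where U: "subgroup U G" "openin TG U" "x <#\<^bsub>G\<^esub> U \<subseteq> W"
      using non_archimedean_coset_neighbourhood[OF assms(1,3) W] by blast
    have "x \<in> carrier G"
      using W openin_subset assms(1) unfolding topological_group_def by blast
    then obtain m where m: "m \<in> carrier M" "x <#\<^bsub>G\<^esub> U = f m <#\<^bsub>G\<^esub> U"
      using epimorphism_meets_open_cosets[OF assms(1) \<open>group M\<close> assms(6,8) U(1,2)]
      unfolding image_cosets_def by blast
    have "f m \<otimes>\<^bsub>G\<^esub> \<one>\<^bsub>G\<^esub> = f m"
      using m(1) assms(1,6) unfolding topological_group_def hom_def by (auto intro: monoid.r_one group.is_monoid)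
    then have "f m \<in> f m <#\<^bsub>G\<^esub> U"
      using subgroup.one_closed[OF U(1)] unfolding l_coset_def by force
    then show ?thesis using m U(3) by auto
  qed
  then show ?thesis
    using closure_of_subset_topspace by (fastforce simp: in_closure_of)
qed

end
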